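(* There exists $\eta > 0$ such that for every Coxeter polygon $P$ in $\mathbb H^2$: (1) if an edge of $P$ has length $\le \eta$, then both angles of $P$ at the endpoints of that edge are right angles; (2) no two adjacent edges of $P$ both have length $\le \eta$; (3) any two non-consecutive vertices of $P$ are at distance at least $\eta$.
   Context: A Coxeter polygon is a finite-area region of $\mathbb H^2$ bounded by finitely many geodesics such that each angle between adjacent sides is of the form $\pi/m$ for an integer $m \ge 2$. *)

theory Defs
  imports Complex_Main
begin

text \<open>Hyperboloid model of the hyperbolic plane H^2:
  points x in R^3 with <x,x> = -1 and x3 > 0, where <.,.> is the Lorentzian form.\<close>

type_synonym pt = "real \<times> real \<times> real"

definition lor :: "pt \<Rightarrow> pt \<Rightarrow> real" where
  "lor x y = fst x * fst y + fst (snd x) * fst (snd y) - snd (snd x) * snd (snd y)"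

definition hyp_point :: "pt \<Rightarrow> bool" where
  "hyp_point x \<longleftrightarrow> lor x x = -1 \<and> snd (snd x) > 0"

definition hdist :: "pt \<Rightarrow> pt \<Rightarrow> real" where
  "hdist x y = arcosh (- lor x y)"

definition padd :: "pt \<Rightarrow> pt \<Rightarrow> pt" where
  "padd x y = (fst x + fst y, fst (snd x) + fst (snd y), snd (snd x) + snd (snd y))"

definition pscale :: "real \<Rightarrow> pt \<Rightarrow> pt" where
  "pscale c x = (c * fst x, c * fst (snd x), c * snd (snd x))"

text \<open>Initial tangent vector at v of the geodesic segment from v to a
  (orthogonal projection of a onto the tangent space at v, up to positive scaling).\<close>
definition tproj :: "pt \<Rightarrow> pt \<Rightarrow> pt" where
  "tproj v a = padd a (pscale (lor a v) v)"

definition hangle :: "pt \<Rightarrow> pt \<Rightarrow> pt \<Rightarrow> real" where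
  "hangle v a b = arccos (lor (tproj v a) (tproj v b) /
      sqrt (lor (tproj v a) (tproj v a) * lor (tproj v b) (tproj v b)))"

text \<open>Euclidean determinant in R^3; the sign of det3 p q x decides on which side of the
  geodesic through p and q (= hyperboloid \<inter> span{p,q}) the point x lies.\<close>
definition det3 :: "pt \<Rightarrow> pt \<Rightarrow> pt \<Rightarrow> real" where
  "det3 a b c =
     fst a * (fst (snd b) * snd (snd c) - snd (snd b) * fst (snd c))
   - fst (snd a) * (fst b * snd (snd c) - snd (snd b) * fst c)
   + snd (snd a) * (fst b * fst (snd c) - fst (snd b) * fst c)"

definition nxt :: "nat \<Rightarrow> nat \<Rightarrow> nat" where
  "nxt n i = (i + 1) mod n"

definition prv :: "nat \<Rightarrow> nat \<Rightarrow> nat" where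
  "prv n i = (i + n - 1) mod n"

text \<open>A compact convex polygon in H^2, given by its vertex list in cyclic (positive) order:
  at least 3 vertices, all in H^2, and for every edge all other vertices lie strictly on
  the same (left) side of the geodesic spanned by that edge.\<close>
definition convex_hpolygon :: "pt list \<Rightarrow> bool" where
  "convex_hpolygon vs \<longleftrightarrow> length vs \<ge> 3 \<and> (\<forall>v\<in>set vs. hyp_point v) \<and>
     (\<forall>i<length vs. \<forall>j<length vs. j \<noteq> i \<and> j \<noteq> nxt (length vs) i \<longrightarrow>
        det3 (vs ! i) (vs ! nxt (length vs) i) (vs ! j) > 0)"

definition vangle :: "pt list \<Rightarrow> nat \<Rightarrow> real" where
  "vangle vs i = hangle (vs ! i) (vs ! prv (length vs) i) (vs ! nxt (length vs) i)"

definition elen :: "pt list \<Rightarrow> nat \<Rightarrow> real" where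
  "elen vs i = hdist (vs ! i) (vs ! nxt (length vs) i)"

definition coxeter_polygon :: "pt list \<Rightarrow> bool" where
  "coxeter_polygon vs \<longleftrightarrow> convex_hpolygon vs \<and>
     (\<forall>i<length vs. \<exists>m::nat. m \<ge> 2 \<and> vangle vs i = pi / real m)"

end

theory Submission
  imports Defs
begin

text \<open>
  Everything rests on one estimate for a hyperbolic triangle: if the angles at the ends of a side
  sum to at most \<open>5 pi / 6\<close>, the third angle is at most \<open>pi / 2\<close> and the side is short, then
  the dual law of cosines makes the defect positive but at most \<open>pi / 43\<close>. A Coxeter triangle has
  defect \<open>pi (1 - 1/a - 1/b - 1/c) \<ge> pi / 42\<close>, and a convex quadrilateral \<open>ABCD\<close> with a short side
  \<open>BC\<close> and angles at most \<open>pi / 2\<close> at \<open>A\<close> and \<open>D\<close> splits along \<open>AC\<close> into two triangles of tiny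
  defect; either way the two angles at the ends of the short segment sum to more than \<open>5 pi / 6\<close>.

  As Coxeter angles are \<open>pi / 2\<close> or at most \<open>pi / 3\<close>, both angles at a short edge are right.
  A short diagonal cuts the Coxeter angles at its ends in two. On either side the two parts sum to
  more than \<open>5 pi / 6\<close> unless that side is a single triangle; then they sum to more than
  \<open>pi / 2 + pi / 43\<close>, or the third angle of the triangle is right and they sum to a value in
  \<open>[pi / 2 - pi / 43, pi / 2)\<close>. Since two Coxeter angles add up to \<open>pi\<close> or to at most \<open>5 pi / 6\<close>,
  no combination fits. Two adjacent short edges give a short diagonal, or else a triangle with
  three right angles.
\<close>

section \<open>Lorentzian algebra and angles at a point\<close>

lemma lor_commute: "lor x y = lor y x"
  unfolding lor_def by (simp add: mult.commute)

lemma det3_rotate: "det3 a b c = det3 b c a"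
  unfolding det3_def by algebra

lemma det3_swap: "det3 a b c = - det3 a c b"
  unfolding det3_def by algebra

lemma det3_mult_det3:
  "det3 v a b * det3 v' a' b' = - (lor v v' * (lor a a' * lor b b' - lor a b' * lor b a')
     - lor v a' * (lor a v' * lor b b' - lor a b' * lor b v')
     + lor v b' * (lor a v' * lor b a' - lor a a' * lor b v'))"
  unfolding det3_def lor_def by algebra

lemma hyp_point_lor_self: "hyp_point x \<Longrightarrow> lor x x = -1"
  unfolding hyp_point_def by simp

lemma hyp_point_lor_le:
  assumes "hyp_point x" "hyp_point y"
  shows "lor x y \<le> -1"
proof -
  obtain x1 x2 x3 where x: "x = (x1, x2, x3)" by (cases x) auto
  obtain y1 y2 y3 where y: "y = (y1, y2, y3)" by (cases y) auto
  have hx: "x3\<^sup>2 = 1 + x1\<^sup>2 + x2\<^sup>2" "x3 > 0"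
    using assms(1) unfolding x hyp_point_def lor_def by (auto simp: power2_eq_square)
  have hy: "y3\<^sup>2 = 1 + y1\<^sup>2 + y2\<^sup>2" "y3 > 0"
    using assms(2) unfolding y hyp_point_def lor_def by (auto simp: power2_eq_square)
  have "(x3 * y3)\<^sup>2 = (1 + x1\<^sup>2 + x2\<^sup>2) * (1 + y1\<^sup>2 + y2\<^sup>2)"
    using hx hy by (simp add: power_mult_distrib)
  also have "\<dots> = (1 + x1 * y1 + x2 * y2)\<^sup>2 + (x1 - y1)\<^sup>2 + (x2 - y2)\<^sup>2 + (x1 * y2 - x2 * y1)\<^sup>2"
    by algebra
  finally have "(1 + x1 * y1 + x2 * y2)\<^sup>2 \<le> (x3 * y3)\<^sup>2"
    by (smt (verit) zero_le_power2)
  then have "1 + x1 * y1 + x2 * y2 \<le> x3 * y3"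
    using hx(2) hy(2) by (smt (verit) mult_pos_pos power2_le_imp_le)
  then show ?thesis
    unfolding x y lor_def by simp
qed

text \<open>For hyperbolic points \<open>tan_norm2 v a = sinh\<^sup>2 d(v,a)\<close>, and \<open>tan_inner v a b\<close> is
  \<open>sinh d(v,a) sinh d(v,b)\<close> times the cosine of the angle at \<open>v\<close> (see \<open>lor_tproj\<close>).\<close>
definition tan_norm2 :: "pt \<Rightarrow> pt \<Rightarrow> real" where
  "tan_norm2 v a = (lor a v)\<^sup>2 - 1"

definition tan_inner :: "pt \<Rightarrow> pt \<Rightarrow> pt \<Rightarrow> real" where
  "tan_inner v a b = lor a v * lor b v + lor a b"

lemma lor_tproj:
  assumes "lor v v = -1"
  shows "lor (tproj v a) (tproj v b) = tan_inner v a b"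
proof -
  obtain v1 v2 v3 where v: "v = (v1, v2, v3)" by (cases v) auto
  have "v1 * v1 + v2 * v2 - v3 * v3 = -1"
    using assms unfolding v lor_def by simp
  then show ?thesis
    unfolding v tproj_def padd_def pscale_def lor_def tan_inner_def by simp algebra
qed

lemma tan_norm2_commute: "tan_norm2 v a = tan_norm2 a v"
  unfolding tan_norm2_def by (simp add: lor_commute)

lemma tan_norm2_nonneg: "hyp_point v \<Longrightarrow> hyp_point a \<Longrightarrow> 0 \<le> tan_norm2 v a"
  using hyp_point_lor_le[of a v] unfolding tan_norm2_def
  by (smt (verit) one_le_power power2_minus)

lemma det3_sq:
  assumes "hyp_point v" "hyp_point a" "hyp_point b"
  shows "(det3 v a b)\<^sup>2 = tan_norm2 v a * tan_norm2 v b - (tan_inner v a b)\<^sup>2"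
proof -
  have "(det3 v a b)\<^sup>2 = det3 v a b * det3 v a b"
    by (simp add: power2_eq_square)
  also note det3_mult_det3[of v a b v a b]
  finally show ?thesis
    using hyp_point_lor_self[OF assms(1)] hyp_point_lor_self[OF assms(2)] hyp_point_lor_self[OF assms(3)]
    unfolding tan_norm2_def tan_inner_def
    by (simp add: lor_commute[of v a] lor_commute[of v b] lor_commute[of b a] power2_eq_square algebra_simps)
qed

lemma tan_inner_sq_le:
  assumes "hyp_point v" "hyp_point a" "hyp_point b"
  shows "(tan_inner v a b)\<^sup>2 \<le> tan_norm2 v a * tan_norm2 v b"
  using det3_sq[OF assms] by (smt (verit) zero_le_power2)

lemma hangle_eq_arccos:
  assumes "hyp_point v" "hyp_point a" "hyp_point b"
  shows "hangle v a b = arccos (tan_inner v a b / (sqrt (tan_norm2 v a) * sqrt (tan_norm2 v b)))"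
proof -
  have v: "lor v v = -1" by (rule hyp_point_lor_self[OF assms(1)])
  have "lor (tproj v x) (tproj v x) = tan_norm2 v x" if "hyp_point x" for x
    using lor_tproj[OF v, of x x] hyp_point_lor_self[OF that]
    unfolding tan_norm2_def tan_inner_def by (simp add: power2_eq_square)
  then show ?thesis
    using assms lor_tproj[OF v, of a b] unfolding hangle_def by (simp add: real_sqrt_mult)
qed

lemma hangle_commute:
  assumes "hyp_point v" "hyp_point a" "hyp_point b"
  shows "hangle v a b = hangle v b a"
  using hangle_eq_arccos[OF assms] hangle_eq_arccos[OF assms(1,3,2)]
  unfolding tan_inner_def by (simp add: lor_commute[of a b] mult.commute)

lemma hangle_nonneg:
  assumes "hyp_point v" "hyp_point a" "hyp_point b"
  shows "0 \<le> hangle v a b"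
proof -
  have "(tan_inner v a b)\<^sup>2 \<le> (sqrt (tan_norm2 v a) * sqrt (tan_norm2 v b))\<^sup>2"
    using tan_inner_sq_le[OF assms] tan_norm2_nonneg assms by (simp add: power_mult_distrib)
  then have "\<bar>tan_inner v a b\<bar> \<le> \<bar>sqrt (tan_norm2 v a) * sqrt (tan_norm2 v b)\<bar>"
    by (simp only: abs_le_square_iff)
  then have "\<bar>tan_inner v a b / (sqrt (tan_norm2 v a) * sqrt (tan_norm2 v b))\<bar> \<le> 1"
    by (cases "sqrt (tan_norm2 v a) * sqrt (tan_norm2 v b) = 0") (auto simp: abs_divide divide_le_eq_1)
  then show ?thesis
    unfolding hangle_eq_arccos[OF assms] by (intro arccos_lbound) (simp_all only: abs_le_iff, linarith+)
qed

lemma hangle_nondegenerate: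
  assumes "hyp_point v" "hyp_point a" "hyp_point b" "det3 v a b \<noteq> 0"
  shows "0 < tan_norm2 v a" "0 < tan_norm2 v b"
    "cos (hangle v a b) = tan_inner v a b / (sqrt (tan_norm2 v a) * sqrt (tan_norm2 v b))"
    "sin (hangle v a b) = \<bar>det3 v a b\<bar> / (sqrt (tan_norm2 v a) * sqrt (tan_norm2 v b))"
    "0 < hangle v a b" "hangle v a b < pi"
proof -
  have sq: "(det3 v a b)\<^sup>2 = tan_norm2 v a * tan_norm2 v b - (tan_inner v a b)\<^sup>2"
    by (rule det3_sq[OF assms(1-3)])
  have prod: "(tan_inner v a b)\<^sup>2 < tan_norm2 v a * tan_norm2 v b"
    using sq assms(4) by (smt (verit) zero_less_power2)
  then have "0 < tan_norm2 v a * tan_norm2 v b"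
    by (smt (verit) zero_le_power2)
  then show A: "0 < tan_norm2 v a" and B: "0 < tan_norm2 v b"
    using tan_norm2_nonneg[OF assms(1,2)] tan_norm2_nonneg[OF assms(1,3)]
    by (auto simp: zero_less_mult_iff)
  define q where "q = tan_inner v a b / (sqrt (tan_norm2 v a) * sqrt (tan_norm2 v b))"
  have q2: "q\<^sup>2 = (tan_inner v a b)\<^sup>2 / (tan_norm2 v a * tan_norm2 v b)"
    unfolding q_def using A B by (simp add: power_divide power_mult_distrib)
  have "q\<^sup>2 < 1"
    using prod A B unfolding q2 by simp
  then have q: "-1 < q" "q < 1"
    by (simp_all add: abs_square_less_1 abs_less_iff)
  have angle: "hangle v a b = arccos q"
    unfolding q_def by (rule hangle_eq_arccos[OF assms(1-3)])
  then show "cos (hangle v a b) = tan_inner v a b / (sqrt (tan_norm2 v a) * sqrt (tan_norm2 v b))"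
    using q q_def by simp
  have "1 - q\<^sup>2 = (det3 v a b)\<^sup>2 / (tan_norm2 v a * tan_norm2 v b)"
    unfolding q2 sq using A B by (simp add: diff_divide_distrib)
  then have "sqrt (1 - q\<^sup>2) = \<bar>det3 v a b\<bar> / (sqrt (tan_norm2 v a) * sqrt (tan_norm2 v b))"
    by (simp add: real_sqrt_divide real_sqrt_mult)
  then show "sin (hangle v a b) = \<bar>det3 v a b\<bar> / (sqrt (tan_norm2 v a) * sqrt (tan_norm2 v b))"
    using angle q sin_arccos by simp
  show "0 < hangle v a b" "hangle v a b < pi"
    using arccos_lt_bounded[OF q] angle by auto
qed

text \<open>The two identities behind the addition formulas for cosine and sine of adjacent angles.\<close>
lemma tan_inner_split:
  assumes "lor v v = -1" "lor x x = -1"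
  shows "tan_inner v a x * tan_inner v x b - det3 v a x * det3 v x b = tan_norm2 v x * tan_inner v a b"
proof -
  obtain v1 v2 v3 where v: "v = (v1, v2, v3)" by (cases v) auto
  obtain x1 x2 x3 where x: "x = (x1, x2, x3)" by (cases x) auto
  have "v1 * v1 + v2 * v2 - v3 * v3 = -1" "x1 * x1 + x2 * x2 - x3 * x3 = -1"
    using assms unfolding v x lor_def by simp_all
  then show ?thesis
    unfolding v x tan_inner_def tan_norm2_def det3_def lor_def by simp algebra
qed

lemma det3_split:
  assumes "lor v v = -1" "lor x x = -1"
  shows "det3 v a x * tan_inner v x b + tan_inner v a x * det3 v x b = tan_norm2 v x * det3 v a b"
proof -
  obtain v1 v2 v3 where v: "v = (v1, v2, v3)" by (cases v) auto
  obtain x1 x2 x3 where x: "x = (x1, x2, x3)" by (cases x) auto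
  have "v1 * v1 + v2 * v2 - v3 * v3 = -1" "x1 * x1 + x2 * x2 - x3 * x3 = -1"
    using assms unfolding v x lor_def by simp_all
  then show ?thesis
    unfolding v x tan_inner_def tan_norm2_def det3_def lor_def by simp algebra
qed

lemma hangle_add:
  assumes hv: "hyp_point v" and ha: "hyp_point a" and hx: "hyp_point x" and hb: "hyp_point b"
    and d1: "det3 v a x > 0" and d2: "det3 v x b > 0" and d3: "det3 v a b > 0"
  shows "hangle v a b = hangle v a x + hangle v x b"
proof -
  note f1 = hangle_nondegenerate[OF hv ha hx, OF d1[THEN less_imp_neq, symmetric]]
  note f2 = hangle_nondegenerate[OF hv hx hb, OF d2[THEN less_imp_neq, symmetric]]
  define sa where "sa = sqrt (tan_norm2 v a)"
  define sx where "sx = sqrt (tan_norm2 v x)"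
  define sb where "sb = sqrt (tan_norm2 v b)"
  have pos: "sa > 0" "sx > 0" "sb > 0"
    using f1 f2 unfolding sa_def sx_def sb_def by simp_all
  have sxx: "sx * sx = tan_norm2 v x"
    unfolding sx_def using f1 by simp
  define t1 where "t1 = hangle v a x"
  define t2 where "t2 = hangle v x b"
  have c1: "cos t1 = tan_inner v a x / (sa * sx)" "sin t1 = det3 v a x / (sa * sx)"
    using f1 d1 unfolding t1_def sa_def sx_def by auto
  have c2: "cos t2 = tan_inner v x b / (sx * sb)" "sin t2 = det3 v x b / (sx * sb)"
    using f2 d2 unfolding t2_def sb_def sx_def by auto
  have "cos (t1 + t2) = (tan_inner v a x * tan_inner v x b - det3 v a x * det3 v x b) / (sa * (sx * sx) * sb)"
    unfolding cos_add c1 c2 using pos by (simp add: field_simps)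
  also have "\<dots> = tan_inner v a b / (sa * sb)"
    unfolding tan_inner_split[OF hyp_point_lor_self[OF hv] hyp_point_lor_self[OF hx]] sxx[symmetric]
    using pos by (simp add: field_simps)
  finally have cos_sum: "cos (t1 + t2) = tan_inner v a b / (sa * sb)" .
  have "sin (t1 + t2) = (det3 v a x * tan_inner v x b + tan_inner v a x * det3 v x b) / (sa * (sx * sx) * sb)"
    unfolding sin_add c1 c2 using pos by (simp add: field_simps)
  also have "\<dots> = det3 v a b / (sa * sb)"
    unfolding det3_split[OF hyp_point_lor_self[OF hv] hyp_point_lor_self[OF hx]] sxx[symmetric]
    using pos by (simp add: field_simps)
  finally have "sin (t1 + t2) > 0"
    using d3 pos by simp
  moreover have "0 < t1" "0 < t2" "t1 < pi" "t2 < pi"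
    using f1 f2 unfolding t1_def t2_def by auto
  ultimately have "t1 + t2 < pi"
    by (smt (verit) sin_le_zero)
  then have "arccos (cos (t1 + t2)) = t1 + t2"
    using \<open>0 < t1\<close> \<open>0 < t2\<close> by (intro arccos_cos) auto
  then show ?thesis
    using hangle_eq_arccos[OF hv ha hb] cos_sum unfolding t1_def t2_def sa_def sb_def by simp
qed

lemma hangle_add_clockwise:
  assumes hv: "hyp_point v" and ha: "hyp_point a" and hx: "hyp_point x" and hb: "hyp_point b"
    and "det3 v a x < 0" "det3 v x b < 0" "det3 v a b < 0"
  shows "hangle v a b = hangle v a x + hangle v x b"
proof -
  have "hangle v b a = hangle v b x + hangle v x a"
    using assms det3_swap[of v b x] det3_swap[of v x a] det3_swap[of v b a]
    by (intro hangle_add[OF hv hb hx ha]) simp_all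
  then show ?thesis
    using hangle_commute[OF hv hb ha] hangle_commute[OF hv hb hx] hangle_commute[OF hv hx ha] by simp
qed

section \<open>Hyperbolic triangles and quadrilaterals\<close>

lemma dual_law_of_cosines:
  assumes hA: "hyp_point A" and hB: "hyp_point B" and hC: "hyp_point C" and D: "det3 A B C \<noteq> 0"
  shows "cos (hangle C A B)
    = - cos (hangle A B C) * cos (hangle B A C) + sin (hangle A B C) * sin (hangle B A C) * (- lor A B)"
proof -
  have "det3 B A C = - det3 A B C" "det3 C A B = det3 A B C"
    using det3_rotate[of A B C] det3_rotate[of B C A] det3_swap[of B C A] by simp_all
  then have DB: "det3 B A C \<noteq> 0" and DC: "det3 C A B \<noteq> 0" and "\<bar>det3 B A C\<bar> = \<bar>det3 A B C\<bar>"
    using D by simp_all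
  note at_A = hangle_nondegenerate[OF hA hB hC D]
  note at_B = hangle_nondegenerate[OF hB hA hC DB]
  note at_C = hangle_nondegenerate[OF hC hA hB DC]
  define x y z where "x = lor A B" and "y = lor A C" and "z = lor B C"
  define sAB sAC sBC where "sAB = sqrt (x\<^sup>2 - 1)" and "sAC = sqrt (y\<^sup>2 - 1)" and "sBC = sqrt (z\<^sup>2 - 1)"
  have norms: "tan_norm2 A B = x\<^sup>2 - 1" "tan_norm2 A C = y\<^sup>2 - 1" "tan_norm2 B A = x\<^sup>2 - 1"
      "tan_norm2 B C = z\<^sup>2 - 1" "tan_norm2 C A = y\<^sup>2 - 1" "tan_norm2 C B = z\<^sup>2 - 1"
    unfolding tan_norm2_def x_def y_def z_def by (simp_all add: lor_commute)
  have inners: "tan_inner A B C = x * y + z" "tan_inner B A C = x * z + y" "tan_inner C A B = y * z + x"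
    unfolding tan_inner_def x_def y_def z_def by (simp_all add: lor_commute)
  have pos: "sAB > 0" "sAC > 0" "sBC > 0" and sAB_sq: "sAB * sAB = x\<^sup>2 - 1"
    using at_A(1,2) at_B(2) unfolding sAB_def sAC_def sBC_def norms by simp_all
  have D_sq: "\<bar>det3 A B C\<bar> * \<bar>det3 A B C\<bar> = (x\<^sup>2 - 1) * (y\<^sup>2 - 1) - (x * y + z)\<^sup>2"
    using det3_sq[OF hA hB hC] unfolding norms inners by (simp add: power2_eq_square)
  have trig: "cos (hangle A B C) = (x * y + z) / (sAB * sAC)" "sin (hangle A B C) = \<bar>det3 A B C\<bar> / (sAB * sAC)"
      "cos (hangle B A C) = (x * z + y) / (sAB * sBC)" "sin (hangle B A C) = \<bar>det3 A B C\<bar> / (sAB * sBC)"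
    using at_A(3,4) at_B(3,4) \<open>\<bar>det3 B A C\<bar> = \<bar>det3 A B C\<bar>\<close>
    unfolding norms inners sAB_def sAC_def sBC_def by simp_all
  have "- cos (hangle A B C) * cos (hangle B A C) + sin (hangle A B C) * sin (hangle B A C) * (- x)
      = (- (x * y + z) * (x * z + y) - x * (\<bar>det3 A B C\<bar> * \<bar>det3 A B C\<bar>)) / ((sAB * sAB) * sAC * sBC)"
    unfolding trig using pos by (simp add: field_simps)
  also have "\<dots> = (y * z + x) / (sAC * sBC)"
    unfolding D_sq sAB_sq using pos at_A(1) unfolding norms by (simp add: field_simps) algebra
  also have "\<dots> = cos (hangle C A B)"
    using at_C(3) unfolding norms inners sAC_def sBC_def by simp
  finally show ?thesis
    unfolding x_def by simp
qed

lemma triangle_not_three_right_angles: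
  assumes hA: "hyp_point A" and hB: "hyp_point B" and hC: "hyp_point C" and D: "det3 A B C \<noteq> 0"
  shows "\<not> (hangle A B C = pi / 2 \<and> hangle B A C = pi / 2 \<and> hangle C A B = pi / 2)"
proof (intro notI, elim conjE)
  assume right: "hangle A B C = pi / 2" "hangle B A C = pi / 2" "hangle C A B = pi / 2"
  have "lor A B = 0"
    using dual_law_of_cosines[OF assms] unfolding right by simp
  then show False
    using hyp_point_lor_le[OF hA hB] by simp
qed

lemma sin_le_sin_between:
  assumes "0 \<le> x" "x \<le> w" "w \<le> pi - x"
  shows "sin x \<le> sin w"
proof (cases "w \<le> pi / 2")
  case True
  then show ?thesis
    using assms by (subst sin_mono_le_eq) auto
next
  case False
  have "sin x \<le> sin (pi - w)"
    using assms False by (subst sin_mono_le_eq) auto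
  then show ?thesis
    by simp
qed

text \<open>By the dual law of cosines, \<open>cos c - cos (pi - a - b) = sin a sin b (cosh AB - 1)\<close>.\<close>
lemma triangle_defect_bound:
  assumes hA: "hyp_point A" and hB: "hyp_point B" and hC: "hyp_point C" and D: "det3 A B C \<noteq> 0"
    and k: "0 < k" "k \<le> pi / 2"
    and sum: "hangle A B C + hangle B A C \<le> pi - k" and right: "hangle C A B \<le> pi / 2"
  shows "0 < pi - hangle A B C - hangle B A C - hangle C A B"
    and "2 * sin (k / 2) * sin ((pi - hangle A B C - hangle B A C - hangle C A B) / 2) \<le> - lor A B - 1"
proof -
  define a b c where "a = hangle A B C" and "b = hangle B A C" and "c = hangle C A B"
  define u where "u = pi - a - b"
  have "det3 B A C \<noteq> 0" "det3 C A B \<noteq> 0"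
    using D det3_rotate[of A B C] det3_rotate[of B C A] det3_swap[of B C A] by auto
  then have angles: "0 < a" "a < pi" "0 < b" "b < pi" "0 < c" "c < pi"
    using hangle_nondegenerate[OF hA hB hC D] hangle_nondegenerate[OF hB hA hC]
      hangle_nondegenerate[OF hC hA hB] unfolding a_def b_def c_def by auto
  have sin_ab: "0 < sin a" "0 < sin b"
    using angles by (auto intro: sin_gt_zero)
  have "lor A B \<noteq> -1"
    using hangle_nondegenerate(1)[OF hA hB hC D] unfolding tan_norm2_def by (auto simp: lor_commute)
  then have cosh_gt: "0 < - lor A B - 1"
    using hyp_point_lor_le[OF hA hB] by simp
  have diff: "cos c - cos u = sin a * sin b * (- lor A B - 1)"
    using dual_law_of_cosines[OF hA hB hC D] unfolding a_def[symmetric] b_def[symmetric] c_def[symmetric] u_def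
    by (simp add: cos_diff cos_add algebra_simps)
  have u: "k \<le> u" "u < pi"
    using sum angles unfolding u_def a_def b_def by auto
  have c_le: "c \<le> pi / 2"
    using right unfolding c_def .
  have "0 < sin a * sin b * (- lor A B - 1)"
    using sin_ab cosh_gt by simp
  then have "cos u < cos c"
    using diff by simp
  then have "c < u"
    using angles u k by (subst (asm) cos_mono_less_eq) auto
  then show "0 < pi - hangle A B C - hangle B A C - hangle C A B"
    unfolding u_def a_def b_def c_def by simp
  have "sin (k / 2) \<le> sin ((c + u) / 2)"
    using k u angles c_le by (intro sin_le_sin_between) auto
  moreover have "0 \<le> sin ((u - c) / 2)"
    using \<open>c < u\<close> u angles by (intro sin_ge_zero) auto
  ultimately have "2 * sin (k / 2) * sin ((u - c) / 2) \<le> sin a * sin b * (- lor A B - 1)"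
    unfolding diff[symmetric] cos_diff_cos by (simp add: mult_right_mono)
  also have "\<dots> \<le> - lor A B - 1"
    using sin_ab cosh_gt by (simp add: mult_le_one mult_left_le_one_le sin_le_one)
  finally show "2 * sin (k / 2) * sin ((pi - hangle A B C - hangle B A C - hangle C A B) / 2) \<le> - lor A B - 1"
    unfolding u_def a_def b_def c_def by (simp add: algebra_simps)
qed

text \<open>Law of sines: \<open>sinh d(v,x) sin v = sinh d(x,y) sin y \<le> sinh d(x,y)\<close>.\<close>
lemma tan_norm2_mult_sin_sq_le:
  assumes hv: "hyp_point v" and hx: "hyp_point x" and hy: "hyp_point y" and D: "det3 v x y \<noteq> 0"
  shows "tan_norm2 v x * (sin (hangle v x y))\<^sup>2 \<le> tan_norm2 x y"
proof -
  note at_v = hangle_nondegenerate[OF hv hx hy D]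
  have "(sin (hangle v x y))\<^sup>2 = (det3 v x y)\<^sup>2 / (tan_norm2 v x * tan_norm2 v y)"
    using at_v(1,2) unfolding at_v(4) by (simp add: power_divide power_mult_distrib)
  then have eq: "tan_norm2 v x * (sin (hangle v x y))\<^sup>2 = (det3 v x y)\<^sup>2 / tan_norm2 v y"
    using at_v(1) by simp
  have "(det3 v x y)\<^sup>2 \<le> tan_norm2 y v * tan_norm2 y x"
    using det3_sq[OF hy hv hx] det3_rotate[of y v x] by (smt (verit) zero_le_power2)
  then have "(det3 v x y)\<^sup>2 / tan_norm2 v y \<le> tan_norm2 x y"
    using at_v(2) by (simp add: divide_simps tan_norm2_commute[of y] mult.commute)
  then show ?thesis
    unfolding eq .
qed

text \<open>\<open>cosh (d\<^sub>1 + d\<^sub>2) = cosh d\<^sub>1 cosh d\<^sub>2 + sinh d\<^sub>1 sinh d\<^sub>2\<close> with both distances at most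
  \<open>arcosh (1 + t)\<close>.\<close>
lemma lor_triangle_le:
  assumes ha: "hyp_point a" and hb: "hyp_point b" and hc: "hyp_point c" and t: "0 \<le> t"
    and ab: "- lor a b \<le> 1 + t" and bc: "- lor b c \<le> 1 + t"
  shows "- lor a c \<le> 1 + 4 * t + 2 * t\<^sup>2"
proof -
  define x y w where "x = - lor a b" and "y = - lor b c" and "w = (1 + t)\<^sup>2 - 1"
  have x: "1 \<le> x" "x \<le> 1 + t" and y: "1 \<le> y" "y \<le> 1 + t"
    using hyp_point_lor_le[OF ha hb] hyp_point_lor_le[OF hb hc] ab bc unfolding x_def y_def by simp_all
  have "tan_norm2 b a = x\<^sup>2 - 1" "tan_norm2 b c = y\<^sup>2 - 1"
    unfolding tan_norm2_def x_def y_def by (simp_all add: lor_commute)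
  moreover have "x\<^sup>2 \<le> (1 + t)\<^sup>2" "y\<^sup>2 \<le> (1 + t)\<^sup>2"
    using x y by (simp_all add: power_mono)
  ultimately have "tan_norm2 b a * tan_norm2 b c \<le> w * w"
    using tan_norm2_nonneg[OF hb ha] tan_norm2_nonneg[OF hb hc] unfolding w_def
    by (intro mult_mono) simp_all
  then have "(tan_inner b a c)\<^sup>2 \<le> w\<^sup>2"
    using tan_inner_sq_le[OF hb ha hc] by (simp add: power2_eq_square)
  moreover have "0 \<le> w"
    unfolding w_def using one_le_power[of "1 + t" 2] t by simp
  ultimately have "- tan_inner b a c \<le> w"
    using abs_le_square_iff[of "tan_inner b a c" w] by simp
  moreover have "tan_inner b a c = x * y + lor a c"
    unfolding tan_inner_def x_def y_def by (simp add: lor_commute)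
  moreover have "x * y \<le> (1 + t) * (1 + t)"
    using x y by (intro mult_mono) simp_all
  ultimately show ?thesis
    unfolding w_def by (simp add: power2_eq_square algebra_simps)
qed

lemma hdist_le_arcosh_iff:
  assumes "hyp_point x" "hyp_point y" "0 \<le> t"
  shows "hdist x y \<le> arcosh (1 + t) \<longleftrightarrow> - lor x y \<le> 1 + t"
  using arcosh_less_iff_real[of "1 + t" "- lor x y"] hyp_point_lor_le[OF assms(1,2)] assms(3)
  unfolding hdist_def by (simp add: not_less[symmetric])

text \<open>\<open>defect_margin\<close> is calibrated so that the defect bound below gives \<open>pi / 43\<close>, less than the
  smallest defect \<open>pi / 42\<close> of a Coxeter triangle; \<open>near_margin\<close> is small enough that the law of
  sines passes shortness on to a second side (\<open>triangle_near_second_side\<close>).\<close>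
definition defect_margin :: real where
  "defect_margin = 2 * sin (pi / 12) * sin (pi / 86)"

definition near_margin :: real where
  "near_margin = defect_margin * (sin (pi / 12))\<^sup>2 / 3"

lemma defect_margin_pos: "0 < defect_margin"
  unfolding defect_margin_def by (simp add: sin_gt_zero)

lemma near_margin_pos: "0 < near_margin"
  unfolding near_margin_def using defect_margin_pos sin_gt_zero[of "pi / 12"] by simp

lemma near_margin_le: "near_margin \<le> defect_margin" "near_margin \<le> 1"
proof -
  have "(sin (pi / 12))\<^sup>2 \<le> 1"
    by (simp add: abs_square_le_1)
  then show le: "near_margin \<le> defect_margin"
    unfolding near_margin_def using defect_margin_pos by (simp add: mult_left_le)
  have "defect_margin \<le> 2"
    unfolding defect_margin_def using sin_le_one sin_ge_zero[of "pi / 12"] sin_ge_zero[of "pi / 86"]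
    by (simp add: mult_le_one)
  moreover have "near_margin \<le> defect_margin / 3"
    unfolding near_margin_def using defect_margin_pos \<open>(sin (pi / 12))\<^sup>2 \<le> 1\<close>
    by (simp add: mult_left_le)
  ultimately show "near_margin \<le> 1"
    by simp
qed

lemma triangle_defect_small:
  assumes hA: "hyp_point A" and hB: "hyp_point B" and hC: "hyp_point C" and D: "det3 A B C \<noteq> 0"
    and sum: "hangle A B C + hangle B A C \<le> 5 * pi / 6" and right: "hangle C A B \<le> pi / 2"
    and near: "- lor A B \<le> 1 + defect_margin"
  shows "0 < pi - hangle A B C - hangle B A C - hangle C A B"
    and "pi - hangle A B C - hangle B A C - hangle C A B \<le> pi / 43"
proof -
  define d where "d = pi - hangle A B C - hangle B A C - hangle C A B"
  have bound: "0 < d" "2 * sin (pi / 12) * sin (d / 2) \<le> - lor A B - 1"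
    using triangle_defect_bound[OF hA hB hC D, of "pi / 6"] sum right unfolding d_def by simp_all
  then show "0 < pi - hangle A B C - hangle B A C - hangle C A B"
    unfolding d_def by simp
  have "d \<le> pi"
    using hangle_nonneg[OF hA hB hC] hangle_nonneg[OF hB hA hC] hangle_nonneg[OF hC hA hB]
    unfolding d_def by linarith
  have "2 * sin (pi / 12) * sin (d / 2) \<le> 2 * sin (pi / 12) * sin (pi / 86)"
    using bound(2) near unfolding defect_margin_def by linarith
  then have "sin (d / 2) \<le> sin (pi / 86)"
    using sin_gt_zero[of "pi / 12"] by simp
  then have "d / 2 \<le> pi / 86"
    using \<open>0 < d\<close> \<open>d \<le> pi\<close> by (subst (asm) sin_mono_le_eq) auto
  then show "pi - hangle A B C - hangle B A C - hangle C A B \<le> pi / 43"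
    unfolding d_def by simp
qed

lemma triangle_near_second_side:
  assumes hA: "hyp_point A" and hB: "hyp_point B" and hC: "hyp_point C" and D: "det3 A B C \<noteq> 0"
    and sum: "hangle A B C + hangle B A C \<le> 5 * pi / 6" and right: "hangle C A B \<le> pi / 2"
    and near: "- lor A B \<le> 1 + near_margin"
  shows "- lor A C \<le> 1 + defect_margin"
proof -
  have "- lor A B \<le> 1 + defect_margin"
    using near near_margin_le by linarith
  then have "pi - hangle A B C - hangle B A C - hangle C A B \<le> pi / 43"
    by (rule triangle_defect_small(2)[OF hA hB hC D sum right])
  then have "pi / 12 \<le> hangle C A B"
    using sum pi_gt_zero by linarith
  then have "sin (pi / 12) \<le> sin (hangle C A B)"
    using right by (subst sin_mono_le_eq) auto
  then have "(sin (pi / 12))\<^sup>2 \<le> (sin (hangle C A B))\<^sup>2"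
    by (simp add: power_mono sin_ge_zero)
  then have "tan_norm2 C A * (sin (pi / 12))\<^sup>2 \<le> tan_norm2 C A * (sin (hangle C A B))\<^sup>2"
    using tan_norm2_nonneg[OF hC hA] by (rule mult_left_mono)
  also have "\<dots> \<le> tan_norm2 A B"
    using D det3_rotate[of C A B] by (intro tan_norm2_mult_sin_sq_le[OF hC hA hB]) simp
  also have "tan_norm2 A B = (- lor A B - 1) * (- lor A B + 1)"
    unfolding tan_norm2_def by (simp add: lor_commute algebra_simps power2_eq_square)
  also have "\<dots> \<le> near_margin * 3"
    using near near_margin_le hyp_point_lor_le[OF hA hB] by (intro mult_mono) auto
  also have "\<dots> = defect_margin * (sin (pi / 12))\<^sup>2"
    unfolding near_margin_def by simp
  finally have "tan_norm2 C A \<le> defect_margin"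
    using sin_gt_zero[of "pi / 12"] by simp
  moreover have "0 \<le> (- lor A C) * (- lor A C - 1)"
    using hyp_point_lor_le[OF hA hC] by (intro mult_nonneg_nonneg) simp_all
  then have "- lor A C - 1 \<le> tan_norm2 C A"
    unfolding tan_norm2_def by (simp add: lor_commute power2_eq_square algebra_simps)
  ultimately show ?thesis
    by simp
qed

text \<open>Cut \<open>ABCD\<close> along \<open>AC\<close>: the triangle \<open>CBA\<close> has a short side and defect at most \<open>pi / 43\<close>,
  which makes \<open>AC\<close> short as well, so \<open>ACD\<close> has defect at most \<open>pi / 43\<close> too. The angle sum of the
  quadrilateral is then close to \<open>2 pi\<close>.\<close>
lemma quadrilateral_near_side_angles:
  assumes hA: "hyp_point A" and hB: "hyp_point B" and hC: "hyp_point C" and hD: "hyp_point D"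
    and d1: "det3 A B C > 0" and d2: "det3 A B D > 0" and d3: "det3 C D A > 0" and d4: "det3 B C D > 0"
    and angle_A: "hangle A B D \<le> pi / 2" and angle_D: "hangle D C A \<le> pi / 2"
    and near: "- lor B C \<le> 1 + near_margin"
  shows "5 * pi / 6 < hangle B A C + hangle C B D"
proof (rule ccontr)
  assume "\<not> 5 * pi / 6 < hangle B A C + hangle C B D"
  then have small: "hangle B A C + hangle C B D \<le> 5 * pi / 6"
    by simp
  have dACD: "det3 A C D > 0"
    using d3 det3_rotate[of A C D] by simp
  have split_A: "hangle A B D = hangle A B C + hangle A C D"
    by (rule hangle_add[OF hA hB hC hD d1 dACD d2])
  have split_C: "hangle C B D = hangle C B A + hangle C A D"
    using d1 d3 d4 det3_swap[of C A B] det3_rotate[of C A B] det3_swap[of C D A]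
      det3_swap[of C D B] det3_rotate[of B C D]
    by (intro hangle_add_clockwise[OF hC hB hA hD]) simp_all
  have nonneg: "0 \<le> hangle A B C" "0 \<le> hangle A C D" "0 \<le> hangle C B A" "0 \<le> hangle C A D"
    using hA hB hC hD by (simp_all add: hangle_nonneg)
  have dCBA: "det3 C B A \<noteq> 0"
    using d1 det3_swap[of C A B] det3_rotate[of C A B] by simp
  have commute: "hangle B C A = hangle B A C" "hangle A C B = hangle A B C" "hangle D A C = hangle D C A"
    using hA hB hC hD by (simp_all add: hangle_commute)
  have sum1: "hangle C B A + hangle B C A \<le> 5 * pi / 6" and right1: "hangle A C B \<le> pi / 2"
    using small angle_A split_A split_C nonneg commute by linarith+
  have "- lor C B \<le> 1 + near_margin"
    using near by (simp add: lor_commute)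
  then have near_AC: "- lor C A \<le> 1 + defect_margin"
    by (rule triangle_near_second_side[OF hC hB hA dCBA sum1 right1])
  have near_CB: "- lor C B \<le> 1 + defect_margin"
    using near near_margin_le by (simp add: lor_commute)
  have defect1: "pi - hangle C B A - hangle B C A - hangle A C B \<le> pi / 43"
    by (rule triangle_defect_small(2)[OF hC hB hA dCBA sum1 right1 near_CB])
  have sum2: "hangle A C D + hangle C A D \<le> 5 * pi / 6" and right2: "hangle D A C \<le> pi / 2"
    using small angle_A angle_D split_A split_C defect1 commute pi_gt_zero by linarith+
  have defect2: "pi - hangle A C D - hangle C A D - hangle D A C \<le> pi / 43"
    using near_AC dACD
    by (intro triangle_defect_small(2)[OF hA hC hD _ sum2 right2]) (simp_all add: lor_commute)
  show False
    using small angle_A angle_D split_A split_C defect1 defect2 commute pi_gt_zero by linarith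
qed

section \<open>Convex and Coxeter polygons\<close>

lemma mod_add_left_cancel_less:
  fixes n :: nat
  assumes "(k + a) mod n = (k + b) mod n" "a < n" "b < n"
  shows "a = b"
proof -
  have "n dvd nat \<bar>int a - int b\<bar>"
    using assms(1) by (simp add: mod_eq_iff_dvd_symdiff_nat)
  moreover have "nat \<bar>int a - int b\<bar> < n"
    using assms(2,3) by linarith
  ultimately have "nat \<bar>int a - int b\<bar> = 0"
    by (meson dvd_imp_le not_le neq0_conv)
  then show ?thesis
    by simp
qed

lemma nonadjacent_offset:
  fixes i j n :: nat
  assumes ij: "i < n" "j < n" "i \<noteq> j" and nonadj: "j \<noteq> nxt n i" "i \<noteq> nxt n j"
  obtains k where "2 \<le> k" "k + 2 \<le> n" "j = (i + k) mod n"
proof (cases "i < j")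
  case True
  have "j \<noteq> i + 1" "i \<noteq> 0 \<or> j + 1 \<noteq> n"
    using nonadj ij unfolding nxt_def by auto
  then show ?thesis
    using True ij by (intro that[of "j - i"]) auto
next
  case False
  have "i \<noteq> j + 1" "j \<noteq> 0 \<or> i + 1 \<noteq> n"
    using nonadj ij unfolding nxt_def by auto
  moreover have "(i + (j + n - i)) mod n = j"
    using False ij by simp
  ultimately show ?thesis
    using False ij by (intro that[of "j + n - i"]) auto
qed

text \<open>Vertices and interior angles indexed by all natural numbers, cyclically; the predecessor
  of \<open>k\<close> is \<open>k + (length vs - 1)\<close>.\<close>
definition vertex :: "pt list \<Rightarrow> nat \<Rightarrow> pt" where
  "vertex vs k = vs ! (k mod length vs)"

definition angle_at :: "pt list \<Rightarrow> nat \<Rightarrow> real" where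
  "angle_at vs k = hangle (vertex vs k) (vertex vs (k + (length vs - 1))) (vertex vs (k + 1))"

lemma vertex_shift: "a = b + length vs \<Longrightarrow> vertex vs a = vertex vs b"
  by (simp add: vertex_def)

lemma vertex_mod: "vertex vs (k mod length vs + c) = vertex vs (k + c)"
  unfolding vertex_def by (simp add: mod_add_left_eq)

lemma angle_at_mod: "angle_at vs (k mod length vs) = angle_at vs k"
  unfolding angle_at_def vertex_mod using vertex_mod[of vs k 0] by simp

lemma coxeter_polygon_convex: "coxeter_polygon vs \<Longrightarrow> convex_hpolygon vs"
  unfolding coxeter_polygon_def by simp

lemma convex_hpolygon_length: "convex_hpolygon vs \<Longrightarrow> 3 \<le> length vs"
  unfolding convex_hpolygon_def by simp

lemma hyp_point_vertex:
  assumes "convex_hpolygon vs"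
  shows "hyp_point (vertex vs k)"
proof -
  have "vs \<noteq> []"
    using convex_hpolygon_length[OF assms] by auto
  then have "vertex vs k \<in> set vs"
    unfolding vertex_def by simp
  then show ?thesis
    using assms unfolding convex_hpolygon_def by blast
qed

lemma det3_vertex_pos:
  assumes convex: "convex_hpolygon vs" and a: "2 \<le> a" "a < length vs"
  shows "det3 (vertex vs k) (vertex vs (k + 1)) (vertex vs (k + a)) > 0"
proof -
  define n where "n = length vs"
  have "3 \<le> n"
    using convex_hpolygon_length[OF convex] unfolding n_def .
  have next_eq: "nxt n (k mod n) = (k + 1) mod n"
    unfolding nxt_def by (rule mod_add_left_eq)
  have "(k + a) mod n \<noteq> (k + b) mod n" if "b < 2" for b
    using mod_add_left_cancel_less[of k a n b] a that \<open>3 \<le> n\<close> unfolding n_def by auto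
  from this[of 0] this[of 1] have ne: "(k + a) mod n \<noteq> k mod n" "(k + a) mod n \<noteq> (k + 1) mod n"
    by simp_all
  have side: "\<And>i j. i < n \<Longrightarrow> j < n \<Longrightarrow> j \<noteq> i \<Longrightarrow> j \<noteq> nxt n i \<Longrightarrow>
      0 < det3 (vs ! i) (vs ! nxt n i) (vs ! j)"
    using convex unfolding convex_hpolygon_def n_def by blast
  have "0 < det3 (vs ! (k mod n)) (vs ! nxt n (k mod n)) (vs ! ((k + a) mod n))"
    by (rule side) (use ne \<open>3 \<le> n\<close> in \<open>simp_all add: next_eq\<close>)
  then show ?thesis
    unfolding vertex_def n_def[symmetric] next_eq .
qed

lemma vangle_eq_angle_at:
  assumes "convex_hpolygon vs" "i < length vs"
  shows "vangle vs i = angle_at vs i"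
proof -
  have "i + length vs - 1 = i + (length vs - 1)"
    using convex_hpolygon_length[OF assms(1)] by simp
  then show ?thesis
    using assms(2) unfolding vangle_def angle_at_def vertex_def prv_def nxt_def by simp
qed

lemma nxt_less: "i < n \<Longrightarrow> nxt n i < n"
  unfolding nxt_def by simp

lemma elen_eq_hdist_vertex:
  "i < length vs \<Longrightarrow> elen vs i = hdist (vertex vs i) (vertex vs (i + 1))"
  unfolding elen_def nxt_def vertex_def by simp

lemma coxeter_angle_at:
  assumes "coxeter_polygon vs"
  obtains m :: nat where "2 \<le> m" "angle_at vs k = pi / real m"
proof -
  have convex: "convex_hpolygon vs"
    using assms by (rule coxeter_polygon_convex)
  have "0 < length vs"
    using convex_hpolygon_length[OF convex] by linarith
  then have "k mod length vs < length vs"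
    by simp
  then show ?thesis
    using assms that vangle_eq_angle_at[OF convex] angle_at_mod[of vs k]
    unfolding coxeter_polygon_def by metis
qed

lemma coxeter_angle_at_cases:
  assumes "coxeter_polygon vs"
  shows "angle_at vs k = pi / 2 \<or> angle_at vs k \<le> pi / 3"
proof -
  obtain m :: nat where m: "2 \<le> m" "angle_at vs k = pi / real m"
    using coxeter_angle_at[OF assms] .
  have "pi / real m \<le> pi / 3" if "3 \<le> m"
    using that by (intro divide_left_mono) auto
  then show ?thesis
    using m by (cases "m = 2") auto
qed

lemma coxeter_angle_at_le:
  assumes "coxeter_polygon vs"
  shows "angle_at vs k \<le> pi / 2"
  using coxeter_angle_at_cases[OF assms, of k] pi_gt_zero by (elim disjE) linarith+

lemma coxeter_angle_at_add_le:
  assumes "coxeter_polygon vs" "\<not> (angle_at vs i = pi / 2 \<and> angle_at vs j = pi / 2)"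
  shows "angle_at vs i + angle_at vs j \<le> 5 * pi / 6"
  using assms(2) coxeter_angle_at_cases[OF assms(1), of i] coxeter_angle_at_cases[OF assms(1), of j]
    coxeter_angle_at_le[OF assms(1), of i] coxeter_angle_at_le[OF assms(1), of j] by auto

lemma angle_at_split:
  assumes convex: "convex_hpolygon vs" and a: "2 \<le> a" "a + 2 \<le> length vs"
  shows "angle_at vs m = hangle (vertex vs m) (vertex vs (m + (length vs - 1))) (vertex vs (m + a))
    + hangle (vertex vs m) (vertex vs (m + a)) (vertex vs (m + 1))"
proof -
  define n where "n = length vs"
  note hyp = hyp_point_vertex[OF convex]
  have "det3 (vertex vs (m + (n - 1))) (vertex vs (m + (n - 1) + 1)) (vertex vs (m + (n - 1) + (a + 1))) > 0"
    using a by (intro det3_vertex_pos[OF convex]) (simp_all add: n_def)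
  moreover have "vertex vs (m + (n - 1) + 1) = vertex vs m" "vertex vs (m + (n - 1) + (a + 1)) = vertex vs (m + a)"
    using a by (simp_all add: vertex_shift n_def)
  ultimately have "det3 (vertex vs m) (vertex vs (m + (n - 1))) (vertex vs (m + a)) < 0"
    using det3_rotate[of "vertex vs (m + (n - 1))" "vertex vs m" "vertex vs (m + a)"]
      det3_swap[of "vertex vs m" "vertex vs (m + a)" "vertex vs (m + (n - 1))"] by simp
  moreover have "det3 (vertex vs m) (vertex vs (m + a)) (vertex vs (m + 1)) < 0"
    using det3_vertex_pos[OF convex, of a m] a
      det3_swap[of "vertex vs m" "vertex vs (m + a)" "vertex vs (m + 1)"] unfolding n_def by simp
  moreover have "det3 (vertex vs m) (vertex vs (m + (n - 1))) (vertex vs (m + 1)) < 0"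
    using det3_vertex_pos[OF convex, of "n - 1" m] a
      det3_swap[of "vertex vs m" "vertex vs (m + (n - 1))" "vertex vs (m + 1)"] unfolding n_def by simp
  ultimately show ?thesis
    unfolding angle_at_def n_def[symmetric] by (rule hangle_add_clockwise[OF hyp hyp hyp hyp])
qed

lemma hangle_prev_le_angle_at:
  assumes convex: "convex_hpolygon vs" and a: "1 \<le> a" "a + 2 \<le> length vs"
  shows "hangle (vertex vs m) (vertex vs (m + (length vs - 1))) (vertex vs (m + a)) \<le> angle_at vs m"
proof (cases "a = 1")
  case True
  then show ?thesis
    unfolding angle_at_def by simp
next
  case False
  note hyp = hyp_point_vertex[OF convex]
  have "0 \<le> hangle (vertex vs m) (vertex vs (m + a)) (vertex vs (m + 1))"
    by (rule hangle_nonneg[OF hyp hyp hyp])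
  moreover have "2 \<le> a"
    using a False by simp
  ultimately show ?thesis
    using angle_at_split[OF convex, of a m] a by simp
qed

lemma hangle_next_le_angle_at:
  assumes convex: "convex_hpolygon vs" and a: "2 \<le> a" "a + 1 \<le> length vs"
  shows "hangle (vertex vs m) (vertex vs (m + a)) (vertex vs (m + 1)) \<le> angle_at vs m"
proof (cases "a + 1 = length vs")
  case True
  then have "a = length vs - 1"
    by simp
  then show ?thesis
    unfolding angle_at_def by simp
next
  case False
  note hyp = hyp_point_vertex[OF convex]
  have "0 \<le> hangle (vertex vs m) (vertex vs (m + (length vs - 1))) (vertex vs (m + a))"
    by (rule hangle_nonneg[OF hyp hyp hyp])
  then show ?thesis
    using angle_at_split[OF convex, of a m] a False by simp
qed

lemma triangle_angle_at:
  assumes convex: "convex_hpolygon vs" and three: "length vs = 3"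
  shows "hangle (vertex vs i) (vertex vs (i + 1)) (vertex vs (i + 2)) = angle_at vs i"
    and "hangle (vertex vs (i + 1)) (vertex vs i) (vertex vs (i + 2)) = angle_at vs (i + 1)"
    and "hangle (vertex vs (i + 2)) (vertex vs i) (vertex vs (i + 1)) = angle_at vs (i + 2)"
proof -
  note hyp = hyp_point_vertex[OF convex]
  have shifts: "vertex vs (i + 1 + 2) = vertex vs i" "vertex vs (i + 2 + 2) = vertex vs (i + 1)"
      "vertex vs (i + 2 + 1) = vertex vs i"
    using three by (simp_all add: vertex_shift)
  show "hangle (vertex vs i) (vertex vs (i + 1)) (vertex vs (i + 2)) = angle_at vs i"
    using hangle_commute[OF hyp hyp hyp, of i "i + 1" "i + 2"] unfolding angle_at_def three by simp
  show "hangle (vertex vs (i + 1)) (vertex vs i) (vertex vs (i + 2)) = angle_at vs (i + 1)"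
    unfolding angle_at_def three using shifts by (simp add: add.assoc)
  have "angle_at vs (i + 2) = hangle (vertex vs (i + 2)) (vertex vs (i + 1)) (vertex vs i)"
    unfolding angle_at_def three using shifts by (simp add: add.assoc)
  then show "hangle (vertex vs (i + 2)) (vertex vs i) (vertex vs (i + 1)) = angle_at vs (i + 2)"
    using hangle_commute[OF hyp hyp hyp, of "i + 2" i "i + 1"] by simp
qed

text \<open>The sum \<open>1/2 + 1/3 + 1/7\<close> is the largest sum of three reciprocals below \<open>1\<close>.\<close>
lemma reciprocal_sum_gap:
  fixes a b c :: nat
  assumes "2 \<le> a" "2 \<le> b" "2 \<le> c" "1 / real a + 1 / real b + 1 / real c < 1"
  shows "1 / real a + 1 / real b + 1 / real c \<le> 41 / 42"
proof -
  have cases: "x = 1/2 \<or> x = 1/3 \<or> x = 1/4 \<or> x = 1/5 \<or> x = 1/6 \<or> (0 < x \<and> x \<le> 1/7)"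
    if "2 \<le> m" "x = 1 / real m" for m :: nat and x :: real
  proof -
    have "m = 2 \<or> m = 3 \<or> m = 4 \<or> m = 5 \<or> m = 6 \<or> 7 \<le> m"
      using that(1) by auto
    moreover have "1 / real m \<le> 1 / 7" if "7 \<le> m"
      using that by (simp add: divide_simps)
    ultimately show ?thesis
      using that by auto
  qed
  from cases[OF assms(1) refl] cases[OF assms(2) refl] cases[OF assms(3) refl] assms(4) show ?thesis
    by (elim disjE conjE) linarith+
qed

section \<open>Short edges and diagonals of Coxeter polygons\<close>

text \<open>Vertices \<open>b\<close> and \<open>b + p\<close> together with their outer neighbours span a convex quadrilateral
  whose angles at those neighbours are parts of Coxeter angles, hence at most \<open>pi / 2\<close>.\<close>
lemma coxeter_near_vertices_angle_sum:
  assumes cp: "coxeter_polygon vs" and p: "1 \<le> p" "p + 3 \<le> length vs"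
    and near: "- lor (vertex vs b) (vertex vs (b + p)) \<le> 1 + near_margin"
  shows "5 * pi / 6 < hangle (vertex vs b) (vertex vs (b + (length vs - 1))) (vertex vs (b + p))
    + hangle (vertex vs (b + p)) (vertex vs b) (vertex vs (b + p + 1))"
proof -
  have convex: "convex_hpolygon vs"
    using cp by (rule coxeter_polygon_convex)
  note hyp = hyp_point_vertex[OF convex]
  define m where "m = b + (length vs - 1)"
  define A B C D where "A = vertex vs m" and "B = vertex vs b"
    and "C = vertex vs (b + p)" and "D = vertex vs (b + p + 1)"
  have idx: "b + p + (length vs - 1 - p) = m" "b + p + 1 + (length vs - 2 - p) = m"
    using p unfolding m_def by simp_all
  have offset_D: "1 \<le> length vs - 2 - p" "length vs - 2 - p + 2 \<le> length vs"
    using p by arith+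
  have shifts: "vertex vs (m + 1) = B" "vertex vs (m + (p + 1)) = C" "vertex vs (m + (p + 2)) = D"
      "vertex vs (b + p + (length vs - 1 - p)) = A" "vertex vs (b + p + (length vs - p)) = B"
      "vertex vs (b + p + 1 + (length vs - 1)) = C" "vertex vs (b + p + 1 + (length vs - 2 - p)) = A"
    unfolding A_def B_def C_def D_def idx unfolding m_def using p by (simp_all add: vertex_shift)
  have "det3 A B C > 0" "det3 A B D > 0"
    using det3_vertex_pos[OF convex, of "p + 1" m] det3_vertex_pos[OF convex, of "p + 2" m] p
    unfolding shifts A_def[symmetric] by simp_all
  moreover have "det3 C D A > 0" "det3 C D B > 0"
    using det3_vertex_pos[OF convex, of "length vs - 1 - p" "b + p"] det3_vertex_pos[OF convex, of "length vs - p" "b + p"] p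
    unfolding shifts C_def[symmetric] D_def[symmetric] by simp_all
  moreover have "hangle A B D \<le> pi / 2"
    using hangle_next_le_angle_at[OF convex, of "p + 2" m] coxeter_angle_at_le[OF cp, of m] p
      hangle_commute[of A B D] hyp
    unfolding shifts A_def[symmetric] by (simp add: A_def B_def D_def)
  moreover have "hangle D C A \<le> pi / 2"
    using hangle_prev_le_angle_at[OF convex offset_D, of "b + p + 1"]
      coxeter_angle_at_le[OF cp, of "b + p + 1"]
    unfolding shifts D_def[symmetric] by simp
  ultimately have "5 * pi / 6 < hangle B A C + hangle C B D"
    using near det3_rotate[of B C D] hyp
    by (intro quadrilateral_near_side_angles) (simp_all add: A_def B_def C_def D_def)
  then show ?thesis
    unfolding A_def B_def C_def D_def m_def .
qed

definition chord_angles :: "pt list \<Rightarrow> nat \<Rightarrow> nat \<Rightarrow> real" where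
  "chord_angles vs i k = hangle (vertex vs i) (vertex vs (i + 1)) (vertex vs (i + k))
    + hangle (vertex vs (i + k)) (vertex vs (i + (k - 1))) (vertex vs i)"

lemma chord_angles_add:
  assumes convex: "convex_hpolygon vs" and k: "2 \<le> k" "k + 2 \<le> length vs"
  shows "angle_at vs i + angle_at vs (i + k) = chord_angles vs i k + chord_angles vs (i + k) (length vs - k)"
proof -
  define n where "n = length vs"
  note hyp = hyp_point_vertex[OF convex]
  have "i + k + (n - k - 1) = i + (n - 1)"
    using k unfolding n_def by simp
  then have shifts: "vertex vs (i + k + (n - k - 1)) = vertex vs (i + (n - 1))"
      "vertex vs (i + k + (n - k)) = vertex vs i" "vertex vs (i + k + (n - 1)) = vertex vs (i + (k - 1))"
    using k unfolding n_def by (simp_all only: vertex_shift)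
  have "angle_at vs i = hangle (vertex vs i) (vertex vs (i + (n - 1))) (vertex vs (i + k))
      + hangle (vertex vs i) (vertex vs (i + k)) (vertex vs (i + 1))"
    unfolding n_def by (rule angle_at_split[OF convex k])
  moreover have "angle_at vs (i + k) = hangle (vertex vs (i + k)) (vertex vs (i + (k - 1))) (vertex vs i)
      + hangle (vertex vs (i + k)) (vertex vs i) (vertex vs (i + k + 1))"
  proof -
    have "2 \<le> n - k" "n - k + 2 \<le> length vs"
      using k unfolding n_def by arith+
    from angle_at_split[OF convex this, of "i + k", folded n_def] show ?thesis
      unfolding shifts .
  qed
  moreover have "chord_angles vs (i + k) (n - k) = hangle (vertex vs (i + k)) (vertex vs (i + k + 1)) (vertex vs i)
      + hangle (vertex vs i) (vertex vs (i + (n - 1))) (vertex vs (i + k))"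
    unfolding chord_angles_def shifts ..
  moreover have "hangle (vertex vs i) (vertex vs (i + k)) (vertex vs (i + 1))
      = hangle (vertex vs i) (vertex vs (i + 1)) (vertex vs (i + k))"
    "hangle (vertex vs (i + k)) (vertex vs i) (vertex vs (i + k + 1))
      = hangle (vertex vs (i + k)) (vertex vs (i + k + 1)) (vertex vs i)"
    by (rule hangle_commute[OF hyp hyp hyp])+
  ultimately show ?thesis
    unfolding chord_angles_def n_def by linarith
qed

lemma coxeter_near_chord_angles_long:
  assumes cp: "coxeter_polygon vs" and k: "3 \<le> k" "k + 2 \<le> length vs"
    and near: "- lor (vertex vs i) (vertex vs (i + k)) \<le> 1 + near_margin"
  shows "5 * pi / 6 < chord_angles vs i k"
proof -
  have convex: "convex_hpolygon vs"
    using cp by (rule coxeter_polygon_convex)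
  note hyp = hyp_point_vertex[OF convex]
  have shifts: "vertex vs (i + k + (length vs - k)) = vertex vs i"
      "vertex vs (i + k + (length vs - 1)) = vertex vs (i + (k - 1))"
      "vertex vs (i + k + (length vs - k) + 1) = vertex vs (i + 1)"
    using k by (simp_all add: vertex_shift)
  have "- lor (vertex vs (i + k)) (vertex vs (i + k + (length vs - k))) \<le> 1 + near_margin"
    using near unfolding shifts by (simp add: lor_commute)
  then have "5 * pi / 6 < hangle (vertex vs (i + k)) (vertex vs (i + (k - 1))) (vertex vs i)
      + hangle (vertex vs i) (vertex vs (i + k)) (vertex vs (i + 1))"
    using coxeter_near_vertices_angle_sum[OF cp, of "length vs - k" "i + k"] k unfolding shifts by simp
  moreover have "hangle (vertex vs i) (vertex vs (i + k)) (vertex vs (i + 1))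
      = hangle (vertex vs i) (vertex vs (i + 1)) (vertex vs (i + k))"
    by (rule hangle_commute[OF hyp hyp hyp])
  ultimately show ?thesis
    unfolding chord_angles_def by linarith
qed

lemma coxeter_near_chord_angles_short:
  assumes cp: "coxeter_polygon vs"
    and near: "- lor (vertex vs i) (vertex vs (i + 2)) \<le> 1 + near_margin"
    and small: "chord_angles vs i 2 \<le> 5 * pi / 6"
  shows "0 < pi - chord_angles vs i 2 - angle_at vs (i + 1)"
    and "pi - chord_angles vs i 2 - angle_at vs (i + 1) \<le> pi / 43"
proof -
  have convex: "convex_hpolygon vs"
    using cp by (rule coxeter_polygon_convex)
  note hyp = hyp_point_vertex[OF convex]
  define A B C where "A = vertex vs i" and "B = vertex vs (i + 2)" and "C = vertex vs (i + 1)"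
  have hA: "hyp_point A" and hB: "hyp_point B" and hC: "hyp_point C"
    unfolding A_def B_def C_def by (rule hyp)+
  have "det3 A C B > 0"
    using det3_vertex_pos[OF convex, of 2 i] convex_hpolygon_length[OF convex]
    unfolding A_def B_def C_def by simp
  then have D: "det3 A B C \<noteq> 0"
    using det3_swap[of A B C] by simp
  have "vertex vs (i + 1 + (length vs - 1)) = A"
    unfolding A_def using convex_hpolygon_length[OF convex] by (simp add: vertex_shift)
  then have "hangle C A B = angle_at vs (i + 1)"
    unfolding angle_at_def A_def B_def C_def by (simp add: add.assoc)
  moreover have "hangle A B C + hangle B A C = chord_angles vs i 2"
    using hangle_commute[OF hA hB hC] hangle_commute[OF hB hA hC]
    unfolding chord_angles_def A_def B_def C_def by (simp add: add.assoc)
  moreover have "- lor A B \<le> 1 + defect_margin"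
    using near near_margin_le unfolding A_def B_def by linarith
  ultimately show "0 < pi - chord_angles vs i 2 - angle_at vs (i + 1)"
    and "pi - chord_angles vs i 2 - angle_at vs (i + 1) \<le> pi / 43"
    using triangle_defect_small[OF hA hB hC D] small coxeter_angle_at_le[OF cp, of "i + 1"]
    by (simp_all add: algebra_simps)
qed

lemma coxeter_near_chord_angles_le:
  assumes cp: "coxeter_polygon vs" and k: "2 \<le> k" "k + 2 \<le> length vs"
    and near: "- lor (vertex vs i) (vertex vs (i + k)) \<le> 1 + near_margin"
    and le: "chord_angles vs i k \<le> pi / 2 + pi / 43"
  shows "pi / 2 - pi / 43 \<le> chord_angles vs i k" and "chord_angles vs i k < pi / 2"
proof -
  have "k = 2"
  proof (rule ccontr)
    assume "k \<noteq> 2"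
    then have "3 \<le> k"
      using k by simp
    from coxeter_near_chord_angles_long[OF cp this k(2) near] show False
      using le pi_gt_zero by linarith
  qed
  moreover have "chord_angles vs i k \<le> 5 * pi / 6"
    using le pi_gt_zero by linarith
  ultimately have "- lor (vertex vs i) (vertex vs (i + 2)) \<le> 1 + near_margin" "chord_angles vs i 2 \<le> 5 * pi / 6"
    using near by simp_all
  note defect = coxeter_near_chord_angles_short[OF cp this]
  then have "angle_at vs (i + 1) = pi / 2"
    using coxeter_angle_at_cases[OF cp, of "i + 1"] le \<open>k = 2\<close> pi_gt_zero by auto
  then show "pi / 2 - pi / 43 \<le> chord_angles vs i k" "chord_angles vs i k < pi / 2"
    using defect \<open>k = 2\<close> by simp_all
qed

lemma coxeter_diagonal_not_near:
  assumes cp: "coxeter_polygon vs" and k: "2 \<le> k" "k + 2 \<le> length vs"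
  shows "1 + near_margin < - lor (vertex vs i) (vertex vs (i + k))"
proof (rule ccontr)
  assume "\<not> ?thesis"
  then have near: "- lor (vertex vs i) (vertex vs (i + k)) \<le> 1 + near_margin"
    by simp
  have convex: "convex_hpolygon vs"
    using cp by (rule coxeter_polygon_convex)
  define s1 s2 where "s1 = chord_angles vs i k" and "s2 = chord_angles vs (i + k) (length vs - k)"
  have sum: "angle_at vs i + angle_at vs (i + k) = s1 + s2"
    unfolding s1_def s2_def by (rule chord_angles_add[OF convex k])
  have "vertex vs (i + k + (length vs - k)) = vertex vs i"
    using k by (simp add: vertex_shift)
  then have near': "- lor (vertex vs (i + k)) (vertex vs (i + k + (length vs - k))) \<le> 1 + near_margin"
    using near by (simp add: lor_commute)
  have k': "2 \<le> length vs - k" "length vs - k + 2 \<le> length vs"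
    using k by arith+
  note D1 = coxeter_near_chord_angles_le[OF cp k near, folded s1_def]
  note D2 = coxeter_near_chord_angles_le[OF cp k' near', folded s2_def]
  have "s1 + s2 \<le> pi"
    using sum coxeter_angle_at_le[OF cp, of i] coxeter_angle_at_le[OF cp, of "i + k"] by simp
  then have "pi / 2 - pi / 43 \<le> s1 \<and> s1 < pi / 2 \<and> pi / 2 - pi / 43 \<le> s2 \<and> s2 < pi / 2"
  proof (cases "s1 \<le> pi / 2")
    case True
    then have "s1 \<le> pi / 2 + pi / 43"
      using pi_gt_zero by linarith
    moreover from D1(1)[OF this] have "s2 \<le> pi / 2 + pi / 43"
      using \<open>s1 + s2 \<le> pi\<close> by linarith
    ultimately show ?thesis
      using D1 D2 by simp
  next
    case False
    then have "s2 \<le> pi / 2 + pi / 43"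
      using \<open>s1 + s2 \<le> pi\<close> pi_gt_zero by linarith
    moreover from D2(1)[OF this] have "s1 \<le> pi / 2 + pi / 43"
      using \<open>s1 + s2 \<le> pi\<close> by linarith
    ultimately show ?thesis
      using D1 D2 by simp
  qed
  then show False
    using sum coxeter_angle_at_add_le[OF cp, of i "i + k"] pi_gt_zero by auto
qed

lemma coxeter_triangle_near_edge:
  assumes cp: "coxeter_polygon vs" and three: "length vs = 3"
    and near: "- lor (vertex vs i) (vertex vs (i + 1)) \<le> 1 + near_margin"
  shows "5 * pi / 6 < angle_at vs i + angle_at vs (i + 1)"
proof (rule ccontr)
  assume "\<not> ?thesis"
  then have small: "angle_at vs i + angle_at vs (i + 1) \<le> 5 * pi / 6"
    by simp
  have convex: "convex_hpolygon vs"
    using cp by (rule coxeter_polygon_convex)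
  note hyp = hyp_point_vertex[OF convex]
  have D: "det3 (vertex vs i) (vertex vs (i + 1)) (vertex vs (i + 2)) \<noteq> 0"
    using det3_vertex_pos[OF convex, of 2 i] three by simp
  have near': "- lor (vertex vs i) (vertex vs (i + 1)) \<le> 1 + defect_margin"
    using near near_margin_le by linarith
  note triangle = triangle_defect_small[OF hyp hyp hyp D _ _ near', unfolded triangle_angle_at[OF convex three]]
  have defect: "0 < pi - angle_at vs i - angle_at vs (i + 1) - angle_at vs (i + 2)"
      "pi - angle_at vs i - angle_at vs (i + 1) - angle_at vs (i + 2) \<le> pi / 43"
    using triangle[OF small coxeter_angle_at_le[OF cp]] by simp_all
  obtain a b c :: nat where abc: "2 \<le> a" "2 \<le> b" "2 \<le> c"
    "angle_at vs i = pi / real a" "angle_at vs (i + 1) = pi / real b" "angle_at vs (i + 2) = pi / real c"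
    using coxeter_angle_at[OF cp] by metis
  define X where "X = 1 / real a + 1 / real b + 1 / real c"
  have "pi * X = angle_at vs i + angle_at vs (i + 1) + angle_at vs (i + 2)"
    unfolding X_def abc by (simp add: field_simps)
  then have "pi * X < pi * 1" "pi * (1 - 1 / 43) \<le> pi * X"
    using defect by (simp_all add: algebra_simps)
  then have "X < 1" "42 / 43 \<le> X"
    using pi_gt_zero by (simp_all only: mult_less_cancel_left_pos mult_le_cancel_left_pos)
  then show False
    using reciprocal_sum_gap[OF abc(1-3)] unfolding X_def by linarith
qed

lemma coxeter_near_edge_angles:
  assumes cp: "coxeter_polygon vs"
    and near: "- lor (vertex vs i) (vertex vs (i + 1)) \<le> 1 + near_margin"
  shows "5 * pi / 6 < angle_at vs i + angle_at vs (i + 1)"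
proof (cases "length vs = 3")
  case True
  then show ?thesis
    by (rule coxeter_triangle_near_edge[OF cp _ near])
next
  case False
  then have "4 \<le> length vs"
    using convex_hpolygon_length[OF coxeter_polygon_convex[OF cp]] by simp
  moreover have "vertex vs (i + 1 + (length vs - 1)) = vertex vs i"
    using \<open>4 \<le> length vs\<close> by (simp add: vertex_shift)
  ultimately show ?thesis
    using coxeter_near_vertices_angle_sum[OF cp _ _ near] unfolding angle_at_def by (simp add: add.assoc)
qed

lemma coxeter_near_edge_right_angles:
  assumes "coxeter_polygon vs"
    and "- lor (vertex vs i) (vertex vs (i + 1)) \<le> 1 + near_margin"
  shows "angle_at vs i = pi / 2 \<and> angle_at vs (i + 1) = pi / 2"
proof (rule ccontr)
  assume "\<not> ?thesis"
  then have "angle_at vs i + angle_at vs (i + 1) \<le> 5 * pi / 6"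
    by (rule coxeter_angle_at_add_le[OF assms(1)])
  then show False
    using coxeter_near_edge_angles[OF assms] by linarith
qed

lemma coxeter_adjacent_edges_not_near:
  assumes cp: "coxeter_polygon vs"
    and near1: "- lor (vertex vs i) (vertex vs (i + 1)) \<le> 1 + near_margin / 8"
    and near2: "- lor (vertex vs (i + 1)) (vertex vs (i + 2)) \<le> 1 + near_margin / 8"
  shows False
proof -
  have convex: "convex_hpolygon vs"
    using cp by (rule coxeter_polygon_convex)
  note hyp = hyp_point_vertex[OF convex]
  show False
  proof (cases "length vs = 3")
    case True
    have "angle_at vs i = pi / 2 \<and> angle_at vs (i + 1) = pi / 2 \<and> angle_at vs (i + 2) = pi / 2"
      using coxeter_near_edge_right_angles[OF cp, of i] coxeter_near_edge_right_angles[OF cp, of "i + 1"]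
        near1 near2 near_margin_pos by (simp add: add.assoc)
    moreover have "det3 (vertex vs i) (vertex vs (i + 1)) (vertex vs (i + 2)) \<noteq> 0"
      using det3_vertex_pos[OF convex, of 2 i] True by simp
    ultimately show False
      using triangle_not_three_right_angles[OF hyp hyp hyp] triangle_angle_at[OF convex True] by metis
  next
    case False
    then have "4 \<le> length vs"
      using convex_hpolygon_length[OF convex] by simp
    have "- lor (vertex vs i) (vertex vs (i + 2)) \<le> 1 + 4 * (near_margin / 8) + 2 * (near_margin / 8)\<^sup>2"
      using near1 near2 near_margin_pos by (intro lor_triangle_le[OF hyp hyp hyp]) (simp_all add: add.assoc)
    also have "\<dots> \<le> 1 + near_margin"
    proof -
      have "near_margin * near_margin \<le> near_margin"
        using near_margin_pos by (intro mult_left_le near_margin_le(2)) simp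
      then show ?thesis
        using near_margin_pos unfolding power2_eq_square by linarith
    qed
    finally show False
      using coxeter_diagonal_not_near[OF cp, of 2 i] \<open>4 \<le> length vs\<close> by simp
  qed
qed

text \<open>The factor \<open>1 / 8\<close> lets \<open>lor_triangle_le\<close> turn two adjacent short edges into a diagonal
  of cosh-length at most \<open>1 + near_margin\<close>.\<close>
definition short_length :: real where
  "short_length = arcosh (1 + near_margin / 8)"

lemma short_length_pos: "0 < short_length"
  unfolding short_length_def using near_margin_pos by (simp add: arcosh_real_gt_1_iff)

lemma short_edge_near:
  assumes "convex_hpolygon vs" "i < length vs" "elen vs i \<le> short_length"
  shows "- lor (vertex vs i) (vertex vs (i + 1)) \<le> 1 + near_margin / 8"
  using assms hdist_le_arcosh_iff[OF hyp_point_vertex hyp_point_vertex] near_margin_pos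
  unfolding elen_eq_hdist_vertex[OF assms(2)] short_length_def by simp

lemma coxeter_short_edge_right_angles:
  assumes cp: "coxeter_polygon vs" and i: "i < length vs" and short: "elen vs i \<le> short_length"
  shows "vangle vs i = pi / 2 \<and> vangle vs (nxt (length vs) i) = pi / 2"
proof -
  have convex: "convex_hpolygon vs"
    using cp by (rule coxeter_polygon_convex)
  have "- lor (vertex vs i) (vertex vs (i + 1)) \<le> 1 + near_margin"
    using short_edge_near[OF convex i short] near_margin_pos by simp
  then have "angle_at vs i = pi / 2 \<and> angle_at vs (i + 1) = pi / 2"
    by (rule coxeter_near_edge_right_angles[OF cp])
  moreover have "nxt (length vs) i < length vs"
    using i by (rule nxt_less)
  ultimately show ?thesis
    using vangle_eq_angle_at[OF convex] i angle_at_mod[of vs "i + 1"] unfolding nxt_def by simp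
qed

lemma coxeter_adjacent_edges_not_short:
  assumes cp: "coxeter_polygon vs" and i: "i < length vs"
  shows "\<not> (elen vs i \<le> short_length \<and> elen vs (nxt (length vs) i) \<le> short_length)"
proof
  assume short: "elen vs i \<le> short_length \<and> elen vs (nxt (length vs) i) \<le> short_length"
  have convex: "convex_hpolygon vs"
    using cp by (rule coxeter_polygon_convex)
  have "nxt (length vs) i < length vs"
    using i by (rule nxt_less)
  moreover have "vertex vs (nxt (length vs) i) = vertex vs (i + 1)"
    "vertex vs (nxt (length vs) i + 1) = vertex vs (i + 2)"
    unfolding nxt_def using vertex_mod[of vs "i + 1" 0] vertex_mod[of vs "i + 1" 1] by simp_all
  ultimately have "- lor (vertex vs (i + 1)) (vertex vs (i + 2)) \<le> 1 + near_margin / 8"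
    using short_edge_near[OF convex, of "nxt (length vs) i"] short by simp
  then show False
    using coxeter_adjacent_edges_not_near[OF cp] short_edge_near[OF convex i] short by blast
qed

lemma coxeter_nonadjacent_vertices_far:
  assumes cp: "coxeter_polygon vs" and ij: "i < length vs" "j < length vs" "i \<noteq> j"
    and nonadj: "j \<noteq> nxt (length vs) i" "i \<noteq> nxt (length vs) j"
  shows "short_length \<le> hdist (vs ! i) (vs ! j)"
proof -
  have convex: "convex_hpolygon vs"
    using cp by (rule coxeter_polygon_convex)
  obtain k where k: "2 \<le> k" "k + 2 \<le> length vs" and j: "j = (i + k) mod length vs"
    using nonadjacent_offset[OF ij nonadj] .
  have "vs ! i = vertex vs i" "vs ! j = vertex vs (i + k)"
    unfolding j vertex_def using ij by simp_all
  moreover have "\<not> hdist (vertex vs i) (vertex vs (i + k)) \<le> short_length"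
  proof -
    have "0 \<le> near_margin / 8" "1 + near_margin / 8 < - lor (vertex vs i) (vertex vs (i + k))"
      using coxeter_diagonal_not_near[OF cp k, of i] near_margin_pos by simp_all
    then show ?thesis
      using hdist_le_arcosh_iff[OF hyp_point_vertex[OF convex] hyp_point_vertex[OF convex]]
      unfolding short_length_def by (simp add: not_le)
  qed
  ultimately show ?thesis
    by simp
qed

theorem lemma5:
  shows "\<exists>\<eta>::real. \<eta> > 0 \<and> (\<forall>vs. coxeter_polygon vs \<longrightarrow>
     (\<forall>i<length vs. elen vs i \<le> \<eta> \<longrightarrow>
         vangle vs i = pi / 2 \<and> vangle vs (nxt (length vs) i) = pi / 2) \<and>
     (\<forall>i<length vs. \<not> (elen vs i \<le> \<eta> \<and> elen vs (nxt (length vs) i) \<le> \<eta>)) \<and>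
     (\<forall>i<length vs. \<forall>j<length vs. i \<noteq> j \<and> j \<noteq> nxt (length vs) i \<and> i \<noteq> nxt (length vs) j
         \<longrightarrow> hdist (vs ! i) (vs ! j) \<ge> \<eta>))"
  using short_length_pos coxeter_short_edge_right_angles coxeter_adjacent_edges_not_short
    coxeter_nonadjacent_vertices_far by blast

end
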